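(* Let $s$ be an aperiodic standard episturmian word over a finite alphabet $A$, and let $s=U_1U_2\cdots U_n\cdots$ be a factorization of $s$ where each $U_i$ ($i\ge1$) is a non-empty prefix of $s$. Then there exist indices $i\neq j$ such that $U_i$ and $U_j$ end in different letters.
   Context: An infinite word $s$ over a finite alphabet $A$ is standard episturmian if its set of factors is closed under reversal (if $u$ is a factor so is its reversal) and every left special factor of $s$ is a prefix of $s$; here a factor $u$ is left special if there are distinct letters $x,y\in A$ with $xu$ and $yu$ both factors of $s$. Aperiodic means not ultimately periodic. *)

theory Defs
  imports Main
begin

definition factor_at :: "(nat \<Rightarrow> 'a) \<Rightarrow> nat \<Rightarrow> nat \<Rightarrow> 'a list" where
  "factor_at s i n = map s [i..<i+n]"

definition factors :: "(nat \<Rightarrow> 'a) \<Rightarrow> 'a list set" where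
  "factors s = {u. \<exists>i. u = factor_at s i (length u)}"

definition is_prefix_of :: "'a list \<Rightarrow> (nat \<Rightarrow> 'a) \<Rightarrow> bool" where
  "is_prefix_of u s \<longleftrightarrow> u = factor_at s 0 (length u)"

definition left_special :: "(nat \<Rightarrow> 'a) \<Rightarrow> 'a list \<Rightarrow> bool" where
  "left_special s u \<longleftrightarrow> (\<exists>x y. x \<noteq> y \<and> x # u \<in> factors s \<and> y # u \<in> factors s)"

definition standard_episturmian :: "(nat \<Rightarrow> 'a) \<Rightarrow> bool" where
  "standard_episturmian s \<longleftrightarrow>
     (\<forall>u \<in> factors s. rev u \<in> factors s) \<and>
     (\<forall>u. left_special s u \<longrightarrow> is_prefix_of u s)"

definition ultimately_periodic :: "(nat \<Rightarrow> 'a) \<Rightarrow> bool" where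
  "ultimately_periodic s \<longleftrightarrow> (\<exists>p>0. \<exists>N. \<forall>n\<ge>N. s (n + p) = s n)"

text \<open>s = U 0 U 1 U 2 ... : the word s is the infinite concatenation of the
  nonempty finite words U i (indices shifted: U_1 of the paper is U 0).\<close>
definition is_factorization :: "(nat \<Rightarrow> 'a list) \<Rightarrow> (nat \<Rightarrow> 'a) \<Rightarrow> bool" where
  "is_factorization U s \<longleftrightarrow> (\<forall>i. U i \<noteq> []) \<and>
     (\<forall>i. U i = factor_at s (\<Sum>j<i. length (U j)) (length (U i)))"

end

theory Submission
  imports Defs "HOL-Library.Product_Lexorder"
begin

text \<open>Let b = s 0. Closure under reversal and the fact that left special factors are
  prefixes force every letter x \<noteq> b to have a unique successor; aperiodicity then makes b
  separating: every factor of length two contains b. Hence s = psi b s' for the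
  morphism psi b : b \<mapsto> b, x \<mapsto> bx, and the derived word s' is again an aperiodic
  standard episturmian word.

  Suppose all U i end in the same letter a. Then every block is a prefix of s followed by a
  nonempty power of a, every block starts with b, and desubstituting by psi b yields a
  factorization of s' whose blocks have the same shape. Desubstitution shortens the first
  block unless it is a power of b, and in that case s' starts with a shorter run of its first
  letter than s does. Lexicographic descent on these two quantities gives the contradiction.\<close>

section \<open>Occurrences of finite words\<close>

definition occurs_at :: "(nat \<Rightarrow> 'a) \<Rightarrow> nat \<Rightarrow> 'a list \<Rightarrow> bool" where
  "occurs_at s i w \<longleftrightarrow> factor_at s i (length w) = w"

lemma length_factor_at [simp]: "length (factor_at s i n) = n"
  by (simp add: factor_at_def)

lemma factor_at_Suc: "factor_at s i (Suc n) = s i # factor_at s (Suc i) n"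
  by (simp add: factor_at_def upt_rec)

lemma occurs_at_Nil [simp]: "occurs_at s i []"
  by (simp add: occurs_at_def factor_at_def)

lemma occurs_at_Cons [simp]: "occurs_at s i (x # xs) \<longleftrightarrow> s i = x \<and> occurs_at s (Suc i) xs"
  by (auto simp: occurs_at_def factor_at_Suc)

lemma occurs_at_append [simp]:
  "occurs_at s i (xs @ ys) \<longleftrightarrow> occurs_at s i xs \<and> occurs_at s (i + length xs) ys"
  by (induction xs arbitrary: i) auto

lemma occurs_at_unique: "occurs_at s i w \<Longrightarrow> occurs_at s i v \<Longrightarrow> length w = length v \<Longrightarrow> w = v"
  by (metis occurs_at_def)

lemma occurs_at_last:
  assumes "occurs_at s i w" "w \<noteq> []"
  shows "s (i + length w - 1) = last w"
proof -
  have "occurs_at s i (butlast w @ [last w])"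
    using assms by simp
  then have "s (i + (length w - 1)) = last w"
    by (simp del: append_butlast_last_id)
  with assms(2) show ?thesis
    by (cases w) simp_all
qed

lemma factors_iff_occurs_at: "u \<in> factors s \<longleftrightarrow> (\<exists>i. occurs_at s i u)"
  unfolding factors_def occurs_at_def by (auto; metis)

lemma is_prefix_of_iff_occurs_at: "is_prefix_of u s \<longleftrightarrow> occurs_at s 0 u"
  by (auto simp: is_prefix_of_def occurs_at_def)

lemma is_prefix_of_appendD: "is_prefix_of (xs @ ys) s \<Longrightarrow> is_prefix_of xs s"
  by (simp add: is_prefix_of_iff_occurs_at)

lemma factors_appendD2: "xs @ ys \<in> factors s \<Longrightarrow> ys \<in> factors s"
  by (auto simp: factors_iff_occurs_at)

lemma is_factorization_occurs_at:
  "is_factorization U s \<Longrightarrow> occurs_at s (\<Sum>j<i. length (U j)) (U i)"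
  by (simp add: is_factorization_def occurs_at_def)

section \<open>The separating first letter\<close>

lemma standard_episturmian_reversed_pair: "standard_episturmian s \<Longrightarrow> [s (Suc k), s k] \<in> factors s"
proof -
  assume "standard_episturmian s"
  moreover have "[s k, s (Suc k)] \<in> factors s"
    by (auto simp: factors_iff_occurs_at)
  ultimately have "rev [s k, s (Suc k)] \<in> factors s"
    unfolding standard_episturmian_def by blast
  then show ?thesis
    by simp
qed

lemma standard_episturmian_successor_unique:
  assumes se: "standard_episturmian s" and "s n \<noteq> s 0" and "s m = s n"
  shows "s (Suc m) = s (Suc n)"
proof (rule ccontr)
  assume "s (Suc m) \<noteq> s (Suc n)"
  moreover note standard_episturmian_reversed_pair[OF se]
  ultimately have "left_special s [s n]"
    unfolding left_special_def using \<open>s m = s n\<close> by metis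
  then have "is_prefix_of [s n] s"
    using se unfolding standard_episturmian_def by blast
  with \<open>s n \<noteq> s 0\<close> show False
    by (simp add: is_prefix_of_iff_occurs_at)
qed

lemma first_letter_separating:
  assumes se: "standard_episturmian s" and ap: "\<not> ultimately_periodic s"
  shows "s n = s 0 \<or> s (Suc n) = s 0"
proof (rule ccontr)
  assume "\<not> ?thesis"
  then have x: "s n \<noteq> s 0" and y: "s (Suc n) \<noteq> s 0" by auto
  obtain r where r: "s r = s (Suc n)" "s (Suc r) = s n"
    using standard_episturmian_reversed_pair[OF se, of n] by (auto simp: factors_iff_occurs_at)
  \<comment> \<open>Both letters have a unique successor, so from position n on s is (s n s (Suc n)) repeated.\<close>
  have alternating: "s m = s n \<and> s (Suc m) = s (Suc n) \<or> s m = s (Suc n) \<and> s (Suc m) = s n"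
    if "n \<le> m" for m
    using that
  proof (induction m rule: dec_induct)
    case base
    then show ?case by simp
  next
    case (step m)
    then show ?case
      using standard_episturmian_successor_unique[OF se x]
        standard_episturmian_successor_unique[OF se y] r by metis
  qed
  have "s (m + 2) = s m" if "n \<le> m" for m
    using alternating[OF that] alternating[of "Suc m"] that by auto
  then have "ultimately_periodic s"
    unfolding ultimately_periodic_def by (intro exI[of _ 2] conjI exI[of _ n]) auto
  with ap show False by simp
qed

section \<open>Desubstitution by the morphism psi\<close>

definition psi_letter :: "'a \<Rightarrow> 'a \<Rightarrow> 'a list" where
  "psi_letter b x = (if x = b then [b] else [b, x])"

definition psi :: "'a \<Rightarrow> 'a list \<Rightarrow> 'a list" where
  "psi b xs = concat (map (psi_letter b) xs)"

lemma psi_Nil [simp]: "psi b [] = []"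
  by (simp add: psi_def)

lemma psi_Cons [simp]: "psi b (x # xs) = psi_letter b x @ psi b xs"
  by (simp add: psi_def)

lemma psi_append [simp]: "psi b (xs @ ys) = psi b xs @ psi b ys"
  by (simp add: psi_def)

lemma psi_eq_Nil_iff [simp]: "psi b w = [] \<longleftrightarrow> w = []"
  by (cases w) (auto simp: psi_letter_def)

lemma psi_letter_eq_butlast_snoc: "psi_letter b x = butlast (psi_letter b x) @ [x]"
  by (simp add: psi_letter_def)

lemma hd_psi: "w \<noteq> [] \<Longrightarrow> hd (psi b w) = b"
  by (cases w) (auto simp: psi_letter_def)

lemma last_psi: "w \<noteq> [] \<Longrightarrow> last (psi b w) = last w"
  by (induction w) (auto simp: psi_letter_def)

lemma psi_replicate [simp]: "psi b (replicate m b) = replicate m b"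
  by (induction m) (auto simp: psi_letter_def)

lemma length_psi: "length (psi b w) = length w + length (filter (\<lambda>x. x \<noteq> b) w)"
  by (induction w) (auto simp: psi_letter_def)

lemma rev_psi_snoc: "rev (psi b u @ [b]) = psi b (rev u) @ [b]"
  by (induction u) (auto simp: psi_letter_def)

text \<open>If s 0 separates s, then s is cut into the blocks [s 0] and [s 0, x] starting at the
  positions block_pos s k, and derived s lists their last letters, so that s = psi (s 0) (derived s).\<close>

fun block_pos :: "(nat \<Rightarrow> 'a) \<Rightarrow> nat \<Rightarrow> nat" where
  "block_pos s 0 = 0"
| "block_pos s (Suc k) = block_pos s k + (if s (Suc (block_pos s k)) = s 0 then 1 else 2)"

definition derived :: "(nat \<Rightarrow> 'a) \<Rightarrow> nat \<Rightarrow> 'a" where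
  "derived s k = s (Suc (block_pos s k))"

lemma block_pos_Suc_psi_letter:
  "block_pos s (Suc k) = block_pos s k + length (psi_letter (s 0) (derived s k))"
  by (simp add: derived_def psi_letter_def)

lemma block_pos_strict_mono: "strict_mono (block_pos s)"
  by (rule strict_mono_Suc_iff[THEN iffD2]) simp

lemma block_pos_between: "\<exists>k. block_pos s k \<le> n \<and> n < block_pos s (Suc k)"
proof (induction n)
  case 0
  show ?case by (rule exI[of _ 0]) simp
next
  case (Suc n)
  then obtain k where k: "block_pos s k \<le> n" "n < block_pos s (Suc k)" by blast
  show ?case
  proof (cases "Suc n = block_pos s (Suc k)")
    case True
    have "block_pos s (Suc k) < block_pos s (Suc (Suc k))"
      by (rule strict_monoD[OF block_pos_strict_mono]) simp
    with True show ?thesis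
      by (intro exI[of _ "Suc k"]) (simp del: block_pos.simps(2))
  next
    case False
    with k show ?thesis by (intro exI[of _ k]) simp
  qed
qed

lemma block_pos_cover:
  obtains k where "n < block_pos s (Suc k)" and "n = block_pos s k \<or> n = Suc (block_pos s k)"
proof -
  obtain k where "block_pos s k \<le> n" "n < block_pos s (Suc k)"
    using block_pos_between by blast
  moreover have "block_pos s (Suc k) \<le> Suc (Suc (block_pos s k))"
    by simp
  ultimately have "n = block_pos s k \<or> n = Suc (block_pos s k)"
    by linarith
  with \<open>n < block_pos s (Suc k)\<close> show thesis
    using that by blast
qed

text \<open>A trailing block [s 0] could also be the first half of a block [s 0, x]; it is only
  decoded as the letter s 0 when the next letter is s 0 as well.\<close>

lemma occurs_at_derived_if_psi:
  assumes "occurs_at s (block_pos s k) (psi (s 0) w @ r)"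
    and "w \<noteq> [] \<Longrightarrow> last w = s 0 \<Longrightarrow> r \<noteq> [] \<and> hd r = s 0"
  shows "occurs_at (derived s) k w"
  using assms
proof (induction w arbitrary: k)
  case Nil
  then show ?case by simp
next
  case (Cons x w)
  let ?p = "block_pos s k"
  have occ: "occurs_at s ?p (psi_letter (s 0) x @ psi (s 0) w @ r)"
    using Cons.prems(1) by simp
  have "s (Suc ?p) = x"
  proof (cases "x = s 0")
    case True
    then have "psi (s 0) w @ r \<noteq> [] \<and> hd (psi (s 0) w @ r) = s 0"
      using Cons.prems(2) hd_psi[of w "s 0"] by (cases "w = []") auto
    then have "psi (s 0) w @ r = s 0 # tl (psi (s 0) w @ r)"
      by (metis list.collapse)
    with occ True show ?thesis
      by (metis occurs_at_Cons append_Cons append_Nil psi_letter_def)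
  next
    case False
    with occ show ?thesis
      by (simp add: psi_letter_def)
  qed
  then have "derived s k = x"
    by (simp add: derived_def)
  moreover have "occurs_at s (block_pos s (Suc k)) (psi (s 0) w @ r)"
    using occ \<open>derived s k = x\<close> unfolding block_pos_Suc_psi_letter by simp
  then have "occurs_at (derived s) (Suc k) w"
    using Cons.IH Cons.prems(2) by simp
  ultimately show ?case by simp
qed

lemma block_pos_shift:
  assumes "\<forall>n\<ge>N. derived s (n + p) = derived s n" and "N \<le> k"
  shows "block_pos s (k + p) = block_pos s k + (block_pos s (N + p) - block_pos s N)"
  using assms(2)
proof (induction k rule: dec_induct)
  case base
  have "block_pos s N \<le> block_pos s (N + p)"
    by (simp add: strict_mono_less_eq[OF block_pos_strict_mono])
  then show ?case by simp
next
  case (step k)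
  then show ?case
    using assms(1) by (simp add: block_pos_Suc_psi_letter del: block_pos.simps(2))
qed

text \<open>For a constant word t the LEAST below is unspecified; run_length is only compared for
  nonconstant words.\<close>

definition run_length :: "(nat \<Rightarrow> 'a) \<Rightarrow> nat" where
  "run_length t = (LEAST n. t n \<noteq> t 0)"

locale separated_word =
  fixes s :: "nat \<Rightarrow> 'a"
  assumes separating: "s n = s 0 \<or> s (Suc n) = s 0"
begin

lemma first_letter_at_block_pos: "s (block_pos s k) = s 0"
proof (induction k)
  case 0
  show ?case by simp
next
  case (Suc k)
  then show ?case
    using separating[of "Suc (block_pos s k)"] by auto
qed

lemma block_pos_if_first_letter:
  assumes "s n = s 0"
  shows "\<exists>k. n = block_pos s k"
proof -
  obtain k where "n < block_pos s (Suc k)" and "n = block_pos s k \<or> n = Suc (block_pos s k)"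
    by (rule block_pos_cover)
  with assms have "n = block_pos s k"
    by auto
  then show ?thesis ..
qed

lemma occurs_at_psi_factor_at_derived:
  "occurs_at s (block_pos s k) (psi (s 0) (factor_at (derived s) k m))
   \<and> block_pos s (k + m) = block_pos s k + length (psi (s 0) (factor_at (derived s) k m))"
proof (induction m arbitrary: k)
  case 0
  show ?case by (simp add: factor_at_def)
next
  case (Suc m)
  have "occurs_at s (block_pos s k) (psi_letter (s 0) (derived s k))"
    using first_letter_at_block_pos[of k] by (auto simp: psi_letter_def derived_def)
  with Suc.IH[of "Suc k"] show ?case
    by (simp add: factor_at_Suc block_pos_Suc_psi_letter del: block_pos.simps(2))
qed

lemma factors_derived_iff: "u \<in> factors (derived s) \<longleftrightarrow> psi (s 0) u @ [s 0] \<in> factors s"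
proof
  assume "u \<in> factors (derived s)"
  then obtain k where "occurs_at (derived s) k u"
    by (auto simp: factors_iff_occurs_at)
  then have u: "u = factor_at (derived s) k (length u)"
    by (simp add: occurs_at_def)
  then have "occurs_at s (block_pos s k) (psi (s 0) u @ [s 0])"
    using occurs_at_psi_factor_at_derived[of k "length u"] first_letter_at_block_pos[of "k + length u"]
    by auto
  then show "psi (s 0) u @ [s 0] \<in> factors s"
    by (auto simp: factors_iff_occurs_at)
next
  assume "psi (s 0) u @ [s 0] \<in> factors s"
  then obtain n where n: "occurs_at s n (psi (s 0) u @ [s 0])"
    by (auto simp: factors_iff_occurs_at)
  then have "s n = s 0"
    by (cases u) (auto simp: psi_letter_def split: if_splits)
  then obtain k where "n = block_pos s k"
    using block_pos_if_first_letter by blast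
  then have "occurs_at (derived s) k u"
    using occurs_at_derived_if_psi[of s k u "[s 0]"] n by simp
  then show "u \<in> factors (derived s)"
    by (auto simp: factors_iff_occurs_at)
qed

lemma standard_episturmian_derived:
  assumes se: "standard_episturmian s"
  shows "standard_episturmian (derived s)"
  unfolding standard_episturmian_def
proof (intro conjI ballI allI impI)
  fix u
  assume "u \<in> factors (derived s)"
  then have "rev (psi (s 0) u @ [s 0]) \<in> factors s"
    using se unfolding factors_derived_iff standard_episturmian_def by blast
  then show "rev u \<in> factors (derived s)"
    by (simp only: rev_psi_snoc factors_derived_iff)
next
  fix u
  assume "left_special (derived s) u"
  then obtain x y where xy: "x \<noteq> y" "x # u \<in> factors (derived s)" "y # u \<in> factors (derived s)"
    by (auto simp: left_special_def)
  have "z # psi (s 0) u @ [s 0] \<in> factors s" if "z # u \<in> factors (derived s)" for z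
  proof -
    have "(butlast (psi_letter (s 0) z) @ [z]) @ psi (s 0) u @ [s 0] \<in> factors s"
      using that unfolding factors_derived_iff
      by (simp only: psi_Cons append_assoc psi_letter_eq_butlast_snoc[symmetric])
    then show ?thesis
      using factors_appendD2[of "butlast (psi_letter (s 0) z)" "z # psi (s 0) u @ [s 0]"] by simp
  qed
  with xy have "left_special s (psi (s 0) u @ [s 0])"
    unfolding left_special_def by blast
  then have "is_prefix_of (psi (s 0) u @ [s 0]) s"
    using se unfolding standard_episturmian_def by blast
  then have "occurs_at s (block_pos s 0) (psi (s 0) u @ [s 0])"
    by (simp only: is_prefix_of_iff_occurs_at block_pos.simps(1))
  then show "is_prefix_of u (derived s)"
    using occurs_at_derived_if_psi[of s 0 u "[s 0]"] by (simp add: is_prefix_of_iff_occurs_at)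
qed

lemma ultimately_periodic_if_derived:
  assumes "ultimately_periodic (derived s)"
  shows "ultimately_periodic s"
proof -
  obtain p N where "p > 0" and per: "\<forall>n\<ge>N. derived s (n + p) = derived s n"
    using assms by (auto simp: ultimately_periodic_def)
  define D where "D = block_pos s (N + p) - block_pos s N"
  have "D > 0"
    using strict_monoD[OF block_pos_strict_mono[of s], of N "N + p"] \<open>p > 0\<close> by (simp add: D_def)
  moreover have "s (n + D) = s n" if "block_pos s N \<le> n" for n
  proof -
    obtain k where k: "n < block_pos s (Suc k)" "n = block_pos s k \<or> n = Suc (block_pos s k)"
      by (rule block_pos_cover)
    have "block_pos s N < block_pos s (Suc k)"
      using k(1) that by simp
    then have "N \<le> k"
      using strict_mono_less[OF block_pos_strict_mono] by (metis less_Suc_eq_le)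
    then have shift: "block_pos s (k + p) = block_pos s k + D"
      unfolding D_def by (rule block_pos_shift[OF per])
    from k(2) show ?thesis
    proof
      assume n: "n = block_pos s k"
      then have "n + D = block_pos s (k + p)"
        using shift by simp
      with n show ?thesis
        by (metis first_letter_at_block_pos)
    next
      assume n: "n = Suc (block_pos s k)"
      then have "n + D = Suc (block_pos s (k + p))"
        using shift by simp
      with n show ?thesis
        using per[rule_format, OF \<open>N \<le> k\<close>] by (simp add: derived_def)
    qed
  qed
  ultimately show ?thesis
    unfolding ultimately_periodic_def by (intro exI[of _ D] conjI exI[of _ "block_pos s N"]) auto
qed

lemma run_length_derived_less:
  assumes "derived s 0 = s 0" and "s n \<noteq> s 0"
  shows "run_length (derived s) < run_length s"
proof -
  let ?r = "run_length (derived s)"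
  have "block_pos s k = k" if "k \<le> ?r" for k
    using that
  proof (induction k)
    case 0
    then show ?case by simp
  next
    case (Suc k)
    then have "derived s k = s 0"
      using not_less_Least[of k "\<lambda>n. derived s n \<noteq> derived s 0"] assms(1)
      by (auto simp: run_length_def)
    with Suc show ?case
      by (simp add: derived_def)
  qed
  then have "s k = s 0" if "k \<le> ?r" for k
    using that first_letter_at_block_pos[of k] by simp
  moreover have "s (run_length s) \<noteq> s 0"
    unfolding run_length_def by (rule LeastI[of _ n]) (rule assms(2))
  ultimately show ?thesis
    by (meson not_less)
qed

end

lemma separated_word_if_aperiodic:
  "standard_episturmian s \<Longrightarrow> \<not> ultimately_periodic s \<Longrightarrow> separated_word s"
  by unfold_locales (rule first_letter_separating)

section \<open>Factorizations into prefixes followed by powers of a letter\<close>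

lemma split_trailing_replicate: "\<exists>Z m. w = Z @ replicate m c \<and> (Z = [] \<or> last Z \<noteq> c)"
proof (induction w rule: rev_induct)
  case Nil
  show ?case by simp
next
  case (snoc x w)
  then obtain Z m where Zm: "w = Z @ replicate m c" "Z = [] \<or> last Z \<noteq> c"
    by blast
  show ?case
  proof (cases "x = c")
    case True
    with Zm have "w @ [x] = Z @ replicate (Suc m) c"
      by (simp add: replicate_append_same)
    with Zm(2) show ?thesis by blast
  next
    case False
    then show ?thesis
      by (intro exI[of _ "w @ [x]"] exI[of _ 0]) simp
  qed
qed

lemma append_replicate_cancel:
  assumes "xs @ replicate j c = ys @ replicate m c" and "ys = [] \<or> last ys \<noteq> c"
  shows "\<exists>k. xs = ys @ replicate k c"
  using assms(1)
proof (induction j arbitrary: m)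
  case 0
  then show ?case by auto
next
  case (Suc j)
  have "m \<noteq> 0"
  proof
    assume "m = 0"
    with Suc.prems have "ys = xs @ c # replicate j c"
      by simp
    with assms(2) show False
      by (simp split: if_splits)
  qed
  then obtain m' where "m = Suc m'"
    using not0_implies_Suc by blast
  with Suc.prems have "(xs @ replicate j c) @ [c] = (ys @ replicate m' c) @ [c]"
    by (simp add: replicate_append_same)
  then show ?case
    unfolding append1_eq_conv by (blast intro: Suc.IH)
qed

text \<open>The trailing power of a is split off because a trailing s 0 cannot be decoded (see
  occurs_at_derived_if_psi); with this shape the invariant survives desubstitution.\<close>

definition prefix_power_factorization :: "(nat \<Rightarrow> 'a list) \<Rightarrow> (nat \<Rightarrow> 'a) \<Rightarrow> 'a \<Rightarrow> bool" where
  "prefix_power_factorization T s a \<longleftrightarrow> is_factorization T s \<and>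
     (\<forall>i. \<exists>Q j. 0 < j \<and> T i = Q @ replicate j a \<and> is_prefix_of Q s)"

lemma prefix_power_factorization_if_common_last:
  assumes "is_factorization U s" and "\<forall>i. is_prefix_of (U i) s" and "\<And>i. last (U i) = a"
  shows "prefix_power_factorization U s a"
  unfolding prefix_power_factorization_def
proof (intro conjI allI)
  fix i
  have "U i \<noteq> []"
    using assms(1) by (simp add: is_factorization_def)
  then have "U i = butlast (U i) @ replicate 1 a"
    using assms(3)[of i] append_butlast_last_id[of "U i"] by simp
  moreover from this have "is_prefix_of (butlast (U i)) s"
    using assms(2) is_prefix_of_appendD by metis
  ultimately show "\<exists>Q j. 0 < j \<and> U i = Q @ replicate j a \<and> is_prefix_of Q s"
    by blast
qed (rule assms(1))

lemma psi_eq_prefix_powerD: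
  assumes "psi b w = Q @ replicate j a" and "0 < j"
  shows "w \<noteq> []" and "last w = a"
proof -
  show "w \<noteq> []"
    using assms by auto
  have "last (psi b w) = a"
    using assms by simp
  then show "last w = a"
    using last_psi[OF \<open>w \<noteq> []\<close>] by simp
qed

lemma prefix_power_desubstitute_other_letter:
  assumes psi: "psi (s 0) w = Q @ replicate j a" and "0 < j" and "is_prefix_of Q s"
    and "a \<noteq> s 0"
  shows "\<exists>X. w = X @ [a] \<and> is_prefix_of X (derived s)"
proof -
  obtain X where X: "w = X @ [a]"
    using psi_eq_prefix_powerD[OF psi \<open>0 < j\<close>] by (metis append_butlast_last_id)
  obtain j' where "j = Suc j'"
    using \<open>0 < j\<close> gr0_implies_Suc by blast
  with psi X \<open>a \<noteq> s 0\<close> have "(Q @ replicate j' a) @ [a] = (psi (s 0) X @ [s 0]) @ [a]"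
    by (simp add: psi_letter_def replicate_append_same)
  then have eq: "Q @ replicate j' a = psi (s 0) X @ [s 0]"
    by simp
  have "j' = 0"
  proof (rule ccontr)
    assume "j' \<noteq> 0"
    then have "last (Q @ replicate j' a) = a"
      by simp
    with eq \<open>a \<noteq> s 0\<close> show False
      by simp
  qed
  with eq \<open>is_prefix_of Q s\<close> have "occurs_at s (block_pos s 0) (psi (s 0) X @ [s 0])"
    by (simp add: is_prefix_of_iff_occurs_at del: occurs_at_append)
  then have "is_prefix_of X (derived s)"
    using occurs_at_derived_if_psi[of s 0 X "[s 0]"] by (simp add: is_prefix_of_iff_occurs_at)
  with X show ?thesis
    by blast
qed

lemma prefix_power_desubstitute_first_letter:
  assumes psi: "psi (s 0) w = Q @ replicate j (s 0)" and "0 < j" and "is_prefix_of Q s"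
  shows "\<exists>Z m. 0 < m \<and> w = Z @ replicate m (s 0) \<and> is_prefix_of Z (derived s)"
proof -
  obtain Z m where Zm: "w = Z @ replicate m (s 0)" "Z = [] \<or> last Z \<noteq> s 0"
    using split_trailing_replicate[of w "s 0"] by blast
  have "0 < m"
  proof (rule ccontr)
    assume "\<not> 0 < m"
    with Zm(1) have "w = Z"
      by simp
    with Zm(2) psi_eq_prefix_powerD[OF psi \<open>0 < j\<close>] show False
      by simp
  qed
  have "Q @ replicate j (s 0) = psi (s 0) Z @ replicate m (s 0)"
    using psi Zm(1) by simp
  moreover have "psi (s 0) Z = [] \<or> last (psi (s 0) Z) \<noteq> s 0"
    using Zm(2) last_psi[of Z "s 0"] by auto
  ultimately obtain k where "Q = psi (s 0) Z @ replicate k (s 0)"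
    by (blast dest: append_replicate_cancel)
  with \<open>is_prefix_of Q s\<close> have "occurs_at s (block_pos s 0) (psi (s 0) Z @ [])"
    by (simp add: is_prefix_of_iff_occurs_at)
  then have "is_prefix_of Z (derived s)"
    using occurs_at_derived_if_psi[of s 0 Z "[]"] Zm(2) by (auto simp: is_prefix_of_iff_occurs_at)
  with Zm(1) \<open>0 < m\<close> show ?thesis
    by blast
qed

lemma prefix_power_desubstitute:
  assumes "psi (s 0) w = Q @ replicate j a" and "0 < j" and "is_prefix_of Q s"
  shows "\<exists>Q' j'. 0 < j' \<and> w = Q' @ replicate j' a \<and> is_prefix_of Q' (derived s)"
proof (cases "a = s 0")
  case True
  then show ?thesis
    using prefix_power_desubstitute_first_letter assms by blast
next
  case False
  then obtain X where "w = X @ replicate 1 a" "is_prefix_of X (derived s)"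
    using prefix_power_desubstitute_other_letter assms by fastforce
  then show ?thesis
    by blast
qed

context separated_word
begin

lemma prefix_power_factorization_block_start:
  assumes "prefix_power_factorization T s a"
  shows "s (\<Sum>j<i. length (T j)) = s 0"
proof -
  let ?pos = "\<lambda>i. \<Sum>j<i. length (T j)"
  have fac: "is_factorization T s"
    using assms by (simp add: prefix_power_factorization_def)
  have last_T: "last (T i) = a" for i
  proof -
    obtain Q j where "0 < j" "T i = Q @ replicate j a"
      using assms unfolding prefix_power_factorization_def by blast
    then show ?thesis
      by simp
  qed
  obtain Q j where Qj: "0 < j" "T i = Q @ replicate j a" "is_prefix_of Q s"
    using assms unfolding prefix_power_factorization_def by blast
  show ?thesis
  proof (cases Q)
    case (Cons q Q')
    then show ?thesis
      using Qj is_factorization_occurs_at[OF fac, of i] by (simp add: is_prefix_of_iff_occurs_at)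
  next
    case Nil
    then have "s (?pos i) = a"
      using Qj is_factorization_occurs_at[OF fac, of i] by (cases j) auto
    \<comment> \<open>a block starting with a follows a block ending with a, and s 0 separates the two a's\<close>
    show ?thesis
    proof (cases i)
      case (Suc i')
      have "T i' \<noteq> []"
        using fac by (simp add: is_factorization_def)
      then have "s (?pos i' + length (T i') - 1) = a" and "Suc (?pos i' + length (T i') - 1) = ?pos i"
        using occurs_at_last[OF is_factorization_occurs_at[OF fac]] last_T Suc by auto
      then show ?thesis
        using separating[of "?pos i' + length (T i') - 1"] \<open>s (?pos i) = a\<close> by metis
    qed simp
  qed
qed

lemma factorization_desubstitute:
  assumes fac: "is_factorization T s" and starts: "\<And>i. s (\<Sum>j<i. length (T j)) = s 0"
  obtains T' where "is_factorization T' (derived s)" and "\<And>i. T i = psi (s 0) (T' i)"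
proof -
  let ?pos = "\<lambda>i. \<Sum>j<i. length (T j)"
  obtain kk where kk: "\<And>i. ?pos i = block_pos s (kk i)"
    using block_pos_if_first_letter[OF starts] by metis
  have kk_Suc: "kk i < kk (Suc i)" for i
  proof -
    have "?pos i < ?pos (Suc i)"
      using fac by (simp add: is_factorization_def)
    then show ?thesis
      using strict_mono_less[OF block_pos_strict_mono] kk by metis
  qed
  have "kk 0 = 0"
    using kk[of 0] strict_mono_eq[OF block_pos_strict_mono, of s "kk 0" 0] by simp
  define T' where "T' i = factor_at (derived s) (kk i) (kk (Suc i) - kk i)" for i
  have T: "T i = psi (s 0) (T' i)" for i
  proof -
    have "kk i + (kk (Suc i) - kk i) = kk (Suc i)"
      using kk_Suc[of i] by simp
    then have "occurs_at s (?pos i) (psi (s 0) (T' i))" "?pos (Suc i) = ?pos i + length (psi (s 0) (T' i))"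
      using occurs_at_psi_factor_at_derived[of "kk i" "kk (Suc i) - kk i"] kk
      by (simp_all add: T'_def)
    then show ?thesis
      using occurs_at_unique[OF is_factorization_occurs_at[OF fac]] by simp
  qed
  have "(\<Sum>j<i. length (T' j)) = kk i" for i
  proof (induction i)
    case 0
    then show ?case by (simp add: \<open>kk 0 = 0\<close>)
  next
    case (Suc i)
    then show ?case
      using kk_Suc[of i] by (simp add: T'_def)
  qed
  then have "is_factorization T' (derived s)"
    using kk_Suc by (simp add: is_factorization_def T'_def factor_at_def not_le)
  with T show thesis
    using that by blast
qed

lemma first_block_measure_decreases:
  assumes fac': "is_factorization T' (derived s)" and T_psi: "T 0 = psi (s 0) (T' 0)"
    and "s n \<noteq> s 0"
  shows "(length (T' 0), run_length (derived s)) < (length (T 0), run_length s)"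
proof (cases "length (T' 0) < length (T 0)")
  case False
  \<comment> \<open>then T' 0 = T 0 is a power of s 0, and derived s begins with a shorter run of s 0\<close>
  then have same_length: "length (T' 0) = length (T 0)" and "\<forall>x\<in>set (T' 0). x = s 0"
    using length_psi[of "s 0" "T' 0"] T_psi by (simp_all add: filter_empty_conv)
  moreover obtain x xs where "T' 0 = x # xs"
    using fac' unfolding is_factorization_def by (meson neq_Nil_conv)
  moreover have "occurs_at (derived s) 0 (T' 0)"
    using is_factorization_occurs_at[OF fac', of 0] by simp
  ultimately have "derived s 0 = s 0"
    by simp
  then have "run_length (derived s) < run_length s"
    using run_length_derived_less \<open>s n \<noteq> s 0\<close> by blast
  with same_length show ?thesis
    by (simp add: less_prod_def)
qed (simp add: less_prod_def)

end

lemma nonconstant_if_not_ultimately_periodic: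
  assumes "\<not> ultimately_periodic s"
  obtains n where "s n \<noteq> s 0"
proof -
  have "\<not> (\<forall>n. s n = s 0)"
  proof
    assume "\<forall>n. s n = s 0"
    then have "ultimately_periodic s"
      unfolding ultimately_periodic_def by (metis zero_less_one)
    with assms show False ..
  qed
  then show thesis
    using that by blast
qed

lemma prefix_power_factorization_derived:
  assumes se: "standard_episturmian s" and ap: "\<not> ultimately_periodic s"
    and T: "prefix_power_factorization T s a"
  obtains T' where "prefix_power_factorization T' (derived s) a"
    and "(length (T' 0), run_length (derived s)) < (length (T 0), run_length s)"
proof -
  interpret separated_word s
    using separated_word_if_aperiodic[OF se ap] .
  have "is_factorization T s"
    using T by (simp add: prefix_power_factorization_def)
  then obtain T' where fac': "is_factorization T' (derived s)" and T_psi: "\<And>i. T i = psi (s 0) (T' i)"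
    using factorization_desubstitute prefix_power_factorization_block_start[OF T] by blast
  have "prefix_power_factorization T' (derived s) a"
    unfolding prefix_power_factorization_def
  proof (intro conjI allI)
    fix i
    obtain Q j where "psi (s 0) (T' i) = Q @ replicate j a" "0 < j" "is_prefix_of Q s"
      using T unfolding prefix_power_factorization_def T_psi by blast
    then show "\<exists>Q j. 0 < j \<and> T' i = Q @ replicate j a \<and> is_prefix_of Q (derived s)"
      by (rule prefix_power_desubstitute)
  qed (rule fac')
  moreover obtain n where "s n \<noteq> s 0"
    using nonconstant_if_not_ultimately_periodic[OF ap] .
  then have "(length (T' 0), run_length (derived s)) < (length (T 0), run_length s)"
    by (rule first_block_measure_decreases[where T = T, OF fac' T_psi])
  ultimately show thesis
    using that by blast
qed

lemma no_prefix_power_factorization: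
  assumes "standard_episturmian s" and "\<not> ultimately_periodic s"
  shows "\<not> prefix_power_factorization T s a"
  using assms
proof (induction "(length (T 0), run_length s)" arbitrary: s T rule: less_induct)
  case less
  interpret separated_word s
    using separated_word_if_aperiodic[OF less.prems] .
  show ?case
  proof
    assume "prefix_power_factorization T s a"
    then obtain T' where T': "prefix_power_factorization T' (derived s) a"
      and lt: "(length (T' 0), run_length (derived s)) < (length (T 0), run_length s)"
      by (rule prefix_power_factorization_derived[OF less.prems])
    have "\<not> ultimately_periodic (derived s)"
      using ultimately_periodic_if_derived less.prems(2) by blast
    with T' show False
      using less.hyps[where s = "derived s" and T = T', OF lt] standard_episturmian_derived[OF less.prems(1)]
      by blast
  qed
qed

theorem mainTheorem9:
  fixes s :: "nat \<Rightarrow> 'a::finite" and U :: "nat \<Rightarrow> 'a list"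
  assumes "standard_episturmian s"
    and "\<not> ultimately_periodic s"
    and "is_factorization U s"
    and "\<forall>i. is_prefix_of (U i) s"
  shows "\<exists>i j. i \<noteq> j \<and> last (U i) \<noteq> last (U j)"
proof (rule ccontr)
  assume "\<not> ?thesis"
  then have "last (U i) = last (U 0)" for i
    by metis
  with assms(3,4) have "prefix_power_factorization U s (last (U 0))"
    by (rule prefix_power_factorization_if_common_last)
  with no_prefix_power_factorization[OF assms(1,2)] show False
    by blast
qed

end
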